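(* Let $x_0\in C^\eta_p$ (some $\eta\in\mathbb{N}^p$) be continuous on $[-\tau,0]$, and let $x:[-\tau,T]\to\mathbb{R}^d$ be a solution with initial segment $x_0$. Let $m,\bar m\in\mathbb{N}$ with $\bar m\ge1$, $0<\varepsilon_1,\varepsilon_2<h$, $t_1=mh+\varepsilon_1$, $t_2=(m+\bar m)h+\varepsilon_2$, with $(m+\bar m+1)h+\varepsilon_2\le T$, and $n=\lfloor m/p\rfloor-1\ge0$. For $k\in\{0,\dots,n+1\}$ and $i\in\{0,\dots,p\}$ let $L^{[k]}_i$, $C^{[k]}_{i,j}$ ($j=1,\dots,\bar m$), $R^{[k]}_i$, $\widetilde R^{[k]}_i$ be boxes such that $x^{[k]}(s)$ lies in $L^{[k]}_i$ for $s\in[(m-i)h+\varepsilon_1,(m-i+1)h]$, in $C^{[k]}_{i,j}$ for $s\in[(m-i+j)h,(m-i+j+1)h]$, in $R^{[k]}_i$ for $s\in[(m-i+\bar m)h,(m-i+\bar m)h+\varepsilon_2]$, and in $\widetilde R^{[k]}_i$ for $s\in[(m-i+\bar m+1)h,(m-i+\bar m+1)h+\varepsilon_2]$. Then for every $t\in[t_1,t_2]$: (a) $x_t\in C^n_p$ and $x_t\in C^{n+1}([-\tau,0])$; (b) $z(x_t)\in\mathrm{hull}\big(L^{[0]}_0,C^{[0]}_{0,1},\dots,C^{[0]}_{0,\bar m-1},R^{[0]}_0\big)$; (c) for $i\in\{1,\dots,p\}$, $k\in\{0,\dots,n\}$: $j_{i,[k]}(x_t)\in\mathrm{hull}\big(L^{[k]}_i,C^{[k]}_{i,1},\dots,C^{[k]}_{i,\bar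 m-1},R^{[k]}_i\big)$; (d) for $i\in\{1,\dots,p\}$ and $s\in[0,h)$: $\xi_i(x_t)(s)\in\mathrm{hull}\big(L^{[n+1]}_i,C^{[n+1]}_{i,1},\dots,C^{[n+1]}_{i,\bar m},\widetilde R^{[n+1]}_i\big)$.
   Context: Fix integers $d\ge1$, $p\ge1$, a delay $\tau>0$, and set $h=\tau/p$, grid points $t_i=-ih$. Let $f:\mathbb{R}^d\times\mathbb{R}^d\to\mathbb{R}^d$ be $C^\infty$ and consider the DDE $x'(t)=f(x(t),x(t-\tau))$. Segments: $x_t(s)=x(t+s)$, $s\in[-\tau,0]$. For $g$ of class $C^k$, $g^{[k]}:=g^{(k)}/k!$ (one-sided derivatives at endpoints). For $\eta\in\mathbb{N}^p$, $C^\eta_p$ is the set of $x:[-\tau,0]\to\mathbb{R}^d$ such that for each $i$ the restriction of $x$ to $[t_i,t_i+h)$ coincides with the restriction of some $\tilde x_i\in C^{\eta_i+1}([t_i,t_i+h])$; for $s\in[t_i,t_i+h)$, $x^{[k]}(s):=\tilde x_i^{[k]}(s)$. $C^n_p:=C^{(n,\dots,n)}_p$. For $x\in C^n_p$: $z(x)=x(0)$, $j_{i,[k]}(x)=x^{[k]}(t_i)$ for $0\le k\le n$, and $\xi_i(x)(s)=x^{[n+1]}(t_i+s)$ for $s\in[0,h)$. A solution on $[-\tau,T]$ with initial segment $x_0$ is $x:[-\tau,T]\to\mathbb{R}^d$ with $x|_{[-\tau,0]}=x_0$, continuous on $[0,T]$, whose right derivative at each $t\in[0,T)$ exists and equals $f(x(t),x(t-\tau))$.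 A box is a product of $d$ compact intervals; $\mathrm{hull}(A_1,\dots,A_r)$ is the smallest box containing $A_1\cup\dots\cup A_r$. *)

theory Defs
  imports "HOL-Analysis.Analysis"
begin

primrec Ck_map :: "nat \<Rightarrow> ('a::real_normed_vector \<Rightarrow> 'b::real_normed_vector) \<Rightarrow> bool" where
  "Ck_map 0 f = continuous_on UNIV f"
| "Ck_map (Suc k) f = (\<exists>D. (\<forall>x. (f has_derivative D x) (at x)) \<and> (\<forall>v. Ck_map k (\<lambda>x. D x v)))"

definition smooth_map :: "('a::real_normed_vector \<Rightarrow> 'b::real_normed_vector) \<Rightarrow> bool" where
  "smooth_map f \<longleftrightarrow> (\<forall>k. Ck_map k f)"

text \<open>D is a family of derivatives of g up to order k on S (one-sided at endpoints,
via derivatives within S), with D k continuous on S.\<close>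
definition derivs_on :: "nat \<Rightarrow> real set \<Rightarrow> (real \<Rightarrow> 'a::real_normed_vector) \<Rightarrow> (nat \<Rightarrow> real \<Rightarrow> 'a) \<Rightarrow> bool" where
  "derivs_on k S g D \<longleftrightarrow>
     (\<forall>s\<in>S. D 0 s = g s) \<and>
     (\<forall>j<k. \<forall>s\<in>S. (D j has_vector_derivative D (Suc j) s) (at s within S)) \<and>
     continuous_on S (D k)"

definition Ck_on :: "nat \<Rightarrow> real set \<Rightarrow> (real \<Rightarrow> 'a::real_normed_vector) \<Rightarrow> bool" where
  "Ck_on k S g \<longleftrightarrow> (\<exists>D. derivs_on k S g D)"

text \<open>g^[k](s) = g^(k)(s)/k!, the k-th derivative taken within S.\<close>
definition tder :: "nat \<Rightarrow> real set \<Rightarrow> (real \<Rightarrow> 'a::real_normed_vector) \<Rightarrow> real \<Rightarrow> 'a" where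
  "tder k S g s = (SOME D. derivs_on k S g D) k s /\<^sub>R fact k"

definition gridpt :: "nat \<Rightarrow> real \<Rightarrow> nat \<Rightarrow> real" where
  "gridpt p \<tau> i = - real i * (\<tau> / real p)"

definition piece :: "nat \<Rightarrow> real \<Rightarrow> nat \<Rightarrow> real set" where
  "piece p \<tau> i = {gridpt p \<tau> i ..< gridpt p \<tau> i + \<tau> / real p}"

definition Cp :: "nat \<Rightarrow> real \<Rightarrow> (nat \<Rightarrow> nat) \<Rightarrow> (real \<Rightarrow> 'a::real_normed_vector) \<Rightarrow> bool" where
  "Cp p \<tau> \<eta> x \<longleftrightarrow>
     (\<forall>i\<in>{1..p}. \<exists>xt. Ck_on (\<eta> i + 1) {gridpt p \<tau> i .. gridpt p \<tau> i + \<tau> / real p} xt \<and>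
                      (\<forall>s\<in>piece p \<tau> i. x s = xt s))"

text \<open>x^[k](s) for s in [t_i, t_i+h): derivative of (the restriction of) x to that piece.\<close>
definition z_fun :: "(real \<Rightarrow> 'a) \<Rightarrow> 'a" where
  "z_fun x = x 0"

definition j_fun :: "nat \<Rightarrow> real \<Rightarrow> nat \<Rightarrow> nat \<Rightarrow> (real \<Rightarrow> 'a::real_normed_vector) \<Rightarrow> 'a" where
  "j_fun p \<tau> i k x = tder k (piece p \<tau> i) x (gridpt p \<tau> i)"

definition xi_fun :: "nat \<Rightarrow> real \<Rightarrow> nat \<Rightarrow> nat \<Rightarrow> (real \<Rightarrow> 'a::real_normed_vector) \<Rightarrow> real \<Rightarrow> 'a" where
  "xi_fun p \<tau> n i x s = tder (Suc n) (piece p \<tau> i) x (gridpt p \<tau> i + s)"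

definition seg :: "(real \<Rightarrow> 'a) \<Rightarrow> real \<Rightarrow> real \<Rightarrow> 'a" where
  "seg x t = (\<lambda>s. x (t + s))"

definition is_solution :: "('a::real_normed_vector \<Rightarrow> 'a \<Rightarrow> 'a) \<Rightarrow> real \<Rightarrow> real \<Rightarrow> (real \<Rightarrow> 'a) \<Rightarrow> (real \<Rightarrow> 'a) \<Rightarrow> bool" where
  "is_solution f \<tau> T x0 x \<longleftrightarrow>
     (\<forall>s\<in>{-\<tau>..0}. x s = x0 s) \<and>
     continuous_on {0..T} x \<and>
     (\<forall>t\<in>{0..<T}. (x has_vector_derivative f (x t) (x (t - \<tau>))) (at_right t))"

definition is_box :: "'a::euclidean_space set \<Rightarrow> bool" where
  "is_box B \<longleftrightarrow> (\<exists>a b. B = cbox a b)"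

definition box_hull :: "'a::euclidean_space set \<Rightarrow> 'a set" where
  "box_hull A = is_box hull A"

end

theory Submission
  imports Defs
begin

text \<open>The delay smooths solutions. On \<open>[0, T]\<close> the solution has the continuous right derivative
  \<open>f (x s) (x (s - \<tau>))\<close> and is therefore \<open>C^1\<close>; and if \<open>x\<close> is \<open>C^(k+1)\<close> on \<open>[k \<tau>, T]\<close>, then
  the right-hand side, hence \<open>x'\<close>, is \<open>C^(k+1)\<close> on \<open>[(k+1) \<tau>, T]\<close>. Since \<open>(n+1) p \<le> m\<close>, every
  segment \<open>x_t\<close> with \<open>t \<ge> t_1\<close> lives in \<open>[n \<tau>, T]\<close>, so it is \<open>C^(n+1)\<close>, and \<open>z\<close>, \<open>j_(i,[k])\<close>
  and \<open>\<xi>_i\<close> of \<open>x_t\<close> are values \<open>x^[k](u)\<close> at points \<open>u = t - i h + s\<close> of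
  \<open>[(m-i) h + \<epsilon>1, (m-i+mb+1) h + \<epsilon>2]\<close>. Each such point lies in one of the intervals on which
  an enclosure is given, and normalized derivatives taken on different nondegenerate
  subintervals agree, so the value lies in the union of the enclosures, a fortiori in its box
  hull.\<close>

section \<open>Smooth functions on sets of reals\<close>

lemma derivs_on_cong: "derivs_on k S g D \<Longrightarrow> (\<And>s. s \<in> S \<Longrightarrow> g s = g' s) \<Longrightarrow> derivs_on k S g' D"
  unfolding derivs_on_def by auto

lemma Ck_on_cong: "Ck_on k S g \<Longrightarrow> (\<And>s. s \<in> S \<Longrightarrow> g s = g' s) \<Longrightarrow> Ck_on k S g'"
  unfolding Ck_on_def using derivs_on_cong by blast

lemma derivs_on_0: "derivs_on k S g D \<Longrightarrow> s \<in> S \<Longrightarrow> D 0 s = g s"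
  unfolding derivs_on_def by blast

lemma derivs_on_subset: "derivs_on k S g D \<Longrightarrow> S' \<subseteq> S \<Longrightarrow> derivs_on k S' g D"
  unfolding derivs_on_def
  by (metis (no_types, lifting) continuous_on_subset has_vector_derivative_within_subset subsetD)

lemma derivs_on_le:
  assumes "derivs_on k S g D" "j \<le> k"
  shows "derivs_on j S g D"
proof -
  have "continuous_on S (D j)"
  proof (cases "j = k")
    case True
    then show ?thesis using assms unfolding derivs_on_def by auto
  next
    case False
    then have "\<forall>s\<in>S. (D j has_vector_derivative D (Suc j) s) (at s within S)"
      using assms unfolding derivs_on_def by auto
    then show ?thesis
      unfolding continuous_on_eq_continuous_within using has_vector_derivative_continuous by blast
  qed
  then show ?thesis using assms unfolding derivs_on_def by auto
qed

lemma derivs_on_translate: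
  assumes "derivs_on k S g D" and "\<And>s. s \<in> I \<Longrightarrow> t + s \<in> S"
  shows "derivs_on k I (\<lambda>s. g (t + s)) (\<lambda>j s. D j (t + s))"
  unfolding derivs_on_def
proof (intro conjI ballI allI impI)
  fix s assume "s \<in> I"
  then show "D 0 (t + s) = g (t + s)" using assms unfolding derivs_on_def by auto
next
  fix j s assume j: "j < k" and s: "s \<in> I"
  have "(D j has_vector_derivative D (Suc j) (t + s)) (at (t + s) within (\<lambda>s. t + s) ` I)"
  proof (rule has_vector_derivative_within_subset)
    show "(D j has_vector_derivative D (Suc j) (t + s)) (at (t + s) within S)"
      using assms j s unfolding derivs_on_def by auto
  qed (use assms(2) in auto)
  moreover have "((\<lambda>s. t + s) has_vector_derivative 1) (at s within I)"
    by (auto intro!: derivative_eq_intros)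
  ultimately show "((\<lambda>s. D j (t + s)) has_vector_derivative D (Suc j) (t + s)) (at s within I)"
    using vector_diff_chain_within[of "\<lambda>s. t + s" 1 s I "D j"] by (simp add: o_def)
next
  have "continuous_on S (D k)" using assms unfolding derivs_on_def by auto
  then show "continuous_on I (\<lambda>s. D k (t + s))"
    by (rule continuous_on_compose2) (use assms(2) in \<open>auto intro!: continuous_intros\<close>)
qed

lemma derivs_on_SucI:
  assumes "\<And>s. s \<in> S \<Longrightarrow> (g has_vector_derivative g' s) (at s within S)"
    and "derivs_on k S g' E"
  shows "derivs_on (Suc k) S g (case_nat g E)"
  unfolding derivs_on_def
proof (intro conjI ballI allI impI)
  fix j s assume "j < Suc k" and s: "s \<in> S"
  then show "(case_nat g E j has_vector_derivative case_nat g E (Suc j) s) (at s within S)"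
    using assms s unfolding derivs_on_def by (cases j) auto
next
  show "continuous_on S (case_nat g E (Suc k))" using assms(2) unfolding derivs_on_def by simp
qed simp

lemma derivs_on_SucD:
  assumes "derivs_on (Suc k) S g D"
  shows "\<forall>s\<in>S. (g has_vector_derivative D 1 s) (at s within S)"
    and "derivs_on k S (D 1) (\<lambda>j. D (Suc j))"
proof -
  have D: "\<forall>s\<in>S. D 0 s = g s"
    "\<forall>j<Suc k. \<forall>s\<in>S. (D j has_vector_derivative D (Suc j) s) (at s within S)"
    "continuous_on S (D (Suc k))"
    using assms unfolding derivs_on_def by auto
  show "\<forall>s\<in>S. (g has_vector_derivative D 1 s) (at s within S)"
    using has_vector_derivative_transform[of _ S g "D 0"] D by auto
  show "derivs_on k S (D 1) (\<lambda>j. D (Suc j))" unfolding derivs_on_def using D by auto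
qed

lemma Ck_on_0: "Ck_on 0 S g \<longleftrightarrow> continuous_on S g"
  unfolding Ck_on_def derivs_on_def using continuous_on_cong by force

lemma Ck_on_Suc:
  "Ck_on (Suc k) S g \<longleftrightarrow> (\<exists>g'. (\<forall>s\<in>S. (g has_vector_derivative g' s) (at s within S)) \<and> Ck_on k S g')"
  unfolding Ck_on_def using derivs_on_SucD derivs_on_SucI by metis

lemma Ck_on_SucD: "Ck_on (Suc k) S g \<Longrightarrow> Ck_on k S g"
  unfolding Ck_on_def using derivs_on_le[OF _ le_SucI[OF order_refl]] by blast

lemma Ck_on_subset: "Ck_on k S g \<Longrightarrow> S' \<subseteq> S \<Longrightarrow> Ck_on k S' g"
  unfolding Ck_on_def by (auto intro: derivs_on_subset)

lemma Ck_on_translate: "Ck_on k S g \<Longrightarrow> (\<And>s. s \<in> I \<Longrightarrow> t + s \<in> S) \<Longrightarrow> Ck_on k I (\<lambda>s. g (t + s))"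
  unfolding Ck_on_def by (auto intro: derivs_on_translate)

lemma Ck_on_const: "Ck_on k S (\<lambda>s. c)"
proof (induction k arbitrary: c)
  case 0
  then show ?case by (simp add: Ck_on_0)
next
  case (Suc k)
  then show ?case unfolding Ck_on_Suc by (auto intro!: exI[of _ "\<lambda>_. 0"])
qed

lemma Ck_on_add: "Ck_on k S a \<Longrightarrow> Ck_on k S b \<Longrightarrow> Ck_on k S (\<lambda>s. a s + b s)"
proof (induction k arbitrary: a b)
  case 0
  then show ?case by (simp add: Ck_on_0 continuous_on_add)
next
  case (Suc k)
  obtain a' where a: "\<forall>s\<in>S. (a has_vector_derivative a' s) (at s within S)" "Ck_on k S a'"
    using Suc.prems Ck_on_Suc by blast
  obtain b' where b: "\<forall>s\<in>S. (b has_vector_derivative b' s) (at s within S)" "Ck_on k S b'"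
    using Suc.prems Ck_on_Suc by blast
  show ?case unfolding Ck_on_Suc
    by (rule exI[of _ "\<lambda>s. a' s + b' s"]) (use a b Suc.IH in \<open>auto intro: has_vector_derivative_add\<close>)
qed

lemma Ck_on_sum:
  "finite A \<Longrightarrow> (\<And>i. i \<in> A \<Longrightarrow> Ck_on k S (g i)) \<Longrightarrow> Ck_on k S (\<lambda>s. \<Sum>i\<in>A. g i s)"
  by (induction A rule: finite_induct) (auto intro: Ck_on_add Ck_on_const)

lemma Ck_on_bounded_linear: "bounded_linear L \<Longrightarrow> Ck_on k S g \<Longrightarrow> Ck_on k S (\<lambda>s. L (g s))"
proof (induction k arbitrary: g)
  case 0
  then show ?case by (simp add: Ck_on_0 bounded_linear.continuous_on)
next
  case (Suc k)
  obtain g' where g: "\<forall>s\<in>S. (g has_vector_derivative g' s) (at s within S)" "Ck_on k S g'"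
    using Suc.prems Ck_on_Suc by blast
  show ?case unfolding Ck_on_Suc
    by (rule exI[of _ "\<lambda>s. L (g' s)"]) (use g Suc in \<open>auto intro: bounded_linear.has_vector_derivative\<close>)
qed

lemma Ck_on_scaleR:
  "Ck_on k S (a :: real \<Rightarrow> real) \<Longrightarrow> Ck_on k S b \<Longrightarrow> Ck_on k S (\<lambda>s. a s *\<^sub>R b s)"
proof (induction k arbitrary: a b)
  case 0
  then show ?case by (simp add: Ck_on_0 continuous_on_scaleR)
next
  case (Suc k)
  obtain a' where a: "\<forall>s\<in>S. (a has_vector_derivative a' s) (at s within S)" "Ck_on k S a'"
    using Suc.prems Ck_on_Suc by blast
  obtain b' where b: "\<forall>s\<in>S. (b has_vector_derivative b' s) (at s within S)" "Ck_on k S b'"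
    using Suc.prems Ck_on_Suc by blast
  have "((\<lambda>s. a s *\<^sub>R b s) has_vector_derivative a s *\<^sub>R b' s + a' s *\<^sub>R b s) (at s within S)"
    if "s \<in> S" for s
    using a b that
    by (auto intro!: has_vector_derivative_scaleR simp: has_real_derivative_iff_has_vector_derivative)
  moreover have "Ck_on k S (\<lambda>s. a s *\<^sub>R b' s + a' s *\<^sub>R b s)"
    using Suc a b by (intro Ck_on_add Suc.IH) (auto dest: Ck_on_SucD)
  ultimately show ?case unfolding Ck_on_Suc by (intro exI[of _ "\<lambda>s. a s *\<^sub>R b' s + a' s *\<^sub>R b s"]) blast
qed

lemma Ck_on_Pair: "Ck_on k S a \<Longrightarrow> Ck_on k S b \<Longrightarrow> Ck_on k S (\<lambda>s. (a s, b s))"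
proof (induction k arbitrary: a b)
  case 0
  then show ?case by (simp add: Ck_on_0 continuous_on_Pair)
next
  case (Suc k)
  obtain a' where a: "\<forall>s\<in>S. (a has_vector_derivative a' s) (at s within S)" "Ck_on k S a'"
    using Suc.prems Ck_on_Suc by blast
  obtain b' where b: "\<forall>s\<in>S. (b has_vector_derivative b' s) (at s within S)" "Ck_on k S b'"
    using Suc.prems Ck_on_Suc by blast
  show ?case unfolding Ck_on_Suc
    by (rule exI[of _ "\<lambda>s. (a' s, b' s)"]) (use a b Suc.IH in \<open>auto intro: has_vector_derivative_Pair\<close>)
qed

lemma Ck_map_compose_Ck_on:
  fixes F :: "'a::euclidean_space \<Rightarrow> 'b::real_normed_vector"
  shows "Ck_map k F \<Longrightarrow> Ck_on k S \<phi> \<Longrightarrow> Ck_on k S (\<lambda>s. F (\<phi> s))"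
proof (induction k arbitrary: F \<phi>)
  case 0
  then show ?case by (auto simp: Ck_on_0 intro: continuous_on_compose2[of UNIV F])
next
  case (Suc k)
  obtain DF where DF: "\<forall>u. (F has_derivative DF u) (at u)" "\<forall>v. Ck_map k (\<lambda>u. DF u v)"
    using Suc.prems(1) by auto
  obtain \<phi>' where \<phi>': "\<forall>s\<in>S. (\<phi> has_vector_derivative \<phi>' s) (at s within S)" "Ck_on k S \<phi>'"
    using Suc.prems(2) Ck_on_Suc by blast
  have lin: "linear (DF u)" for u using DF(1) has_derivative_linear by blast
  have "((\<lambda>s. F (\<phi> s)) has_vector_derivative DF (\<phi> s) (\<phi>' s)) (at s within S)" if "s \<in> S" for s
  proof -
    have "((\<lambda>s. F (\<phi> s)) has_derivative (\<lambda>t. DF (\<phi> s) (t *\<^sub>R \<phi>' s))) (at s within S)"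
      using \<phi>'(1) that DF(1) unfolding has_vector_derivative_def
      by (intro has_derivative_in_compose[of \<phi> _ s S F]) (auto intro: has_derivative_at_withinI)
    then show ?thesis unfolding has_vector_derivative_def using linear_scale[OF lin] by simp
  qed
  moreover have "Ck_on k S (\<lambda>s. DF (\<phi> s) (\<phi>' s))"
  proof -
    \<comment> \<open>Expanding \<open>\<phi>' s\<close> in the basis reduces the chain rule term to sums of products of
       \<open>C\<^sup>k\<close> functions.\<close>
    have expand: "DF (\<phi> s) (\<phi>' s) = (\<Sum>b\<in>Basis. (\<phi>' s \<bullet> b) *\<^sub>R DF (\<phi> s) b)" for s
      by (subst (1) euclidean_representation[symmetric])
        (simp only: linear_sum[OF lin] linear_scale[OF lin])
    have "Ck_on k S (\<lambda>s. \<Sum>b\<in>Basis. (\<phi>' s \<bullet> b) *\<^sub>R DF (\<phi> s) b)"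
    proof (rule Ck_on_sum[OF finite_Basis])
      fix b :: 'a
      have "Ck_on k S (\<lambda>s. \<phi>' s \<bullet> b)" by (rule Ck_on_bounded_linear[OF bounded_linear_inner_left \<phi>'(2)])
      moreover have "Ck_on k S (\<lambda>s. DF (\<phi> s) b)"
        using Suc.IH DF(2) Suc.prems(2) Ck_on_SucD by blast
      ultimately show "Ck_on k S (\<lambda>s. (\<phi>' s \<bullet> b) *\<^sub>R DF (\<phi> s) b)" by (rule Ck_on_scaleR)
    qed
    then show ?thesis by (rule Ck_on_cong) (simp add: expand)
  qed
  ultimately show ?case unfolding Ck_on_Suc by (intro exI[of _ "\<lambda>s. DF (\<phi> s) (\<phi>' s)"]) blast
qed

section \<open>Functions with a continuous right derivative\<close>

lemma right_derivative_zero_extend: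
  fixes y :: "real \<Rightarrow> 'a::real_normed_vector"
  assumes d: "(y has_vector_derivative 0) (at c within {c<..b})" and "c < b" and "e > 0"
    and c: "norm (y c - y a) \<le> e * (c - a)"
  obtains w where "c < w" "w \<le> b" "\<And>u. u \<in> {c..w} \<Longrightarrow> norm (y u - y a) \<le> e * (u - a)"
proof -
  have "\<exists>\<delta>>0. \<forall>u\<in>{c<..b}. norm (u - c) < \<delta> \<longrightarrow> norm (y u - y c - (u - c) *\<^sub>R 0) \<le> e * norm (u - c)"
    using d \<open>e > 0\<close> unfolding has_vector_derivative_def has_derivative_within_alt by blast
  then obtain \<delta> where "\<delta> > 0"
    and \<delta>: "\<And>u. u \<in> {c<..b} \<Longrightarrow> u - c < \<delta> \<Longrightarrow> norm (y u - y c) \<le> e * (u - c)"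
    by auto
  show ?thesis
  proof
    show "c < min b (c + \<delta> / 2)" "min b (c + \<delta> / 2) \<le> b" using \<open>c < b\<close> \<open>\<delta> > 0\<close> by auto
    fix u assume u: "u \<in> {c..min b (c + \<delta> / 2)}"
    show "norm (y u - y a) \<le> e * (u - a)"
    proof (cases "u = c")
      case True
      then show ?thesis using c by simp
    next
      case False
      then have "norm (y u - y c) \<le> e * (u - c)" using u \<open>\<delta> > 0\<close> by (intro \<delta>) auto
      moreover have "norm (y u - y a) \<le> norm (y u - y c) + norm (y c - y a)"
        by (rule norm_diff_triangle_le) auto
      ultimately show ?thesis using c by (simp add: algebra_simps)
    qed
  qed
qed

lemma right_derivative_zero_bound:
  fixes y :: "real \<Rightarrow> 'a::real_normed_vector"
  assumes "a \<le> b" and cont: "continuous_on {a..b} y"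
    and d: "\<And>t. t \<in> {a..<b} \<Longrightarrow> (y has_vector_derivative 0) (at t within {t<..b})"
    and "e > 0"
  shows "norm (y b - y a) \<le> e * (b - a)"
proof -
  define S where "S = {t\<in>{a..b}. \<forall>u\<in>{a..t}. norm (y u - y a) \<le> e * (u - a)}"
  have "a \<in> S" using \<open>a \<le> b\<close> by (auto simp: S_def)
  have bdd: "bdd_above S" unfolding S_def by (rule bdd_aboveI[of _ b]) auto
  define c where "c = Sup S"
  have "a \<le> c" unfolding c_def using \<open>a \<in> S\<close> bdd by (rule cSup_upper)
  have "c \<le> b" unfolding c_def using \<open>a \<in> S\<close> by (intro cSup_least) (auto simp: S_def)
  have below_c: "norm (y u - y a) \<le> e * (u - a)" if "u \<in> {a..<c}" for u
  proof -
    from that have "u < Sup S" by (simp add: c_def)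
    then obtain t where "t \<in> S" "u < t" using less_cSup_iff[OF _ bdd] \<open>a \<in> S\<close> by blast
    then show ?thesis using that by (auto simp: S_def)
  qed
  have "c \<in> S"
  proof (cases "a = c")
    case True
    then show ?thesis using \<open>a \<in> S\<close> by simp
  next
    case False
    have "continuous_on {a..c} y" by (rule continuous_on_subset[OF cont]) (use \<open>c \<le> b\<close> in auto)
    then have "continuous_on {a..c} (\<lambda>u. norm (y u - y a))"
      by (intro continuous_on_norm continuous_on_diff continuous_on_const)
    moreover have "continuous_on {a..c} (\<lambda>u. e * (u - a))" by (intro continuous_intros)
    ultimately have "closed {u \<in> {a..c}. norm (y u - y a) \<le> e * (u - a)}"
      by (rule continuous_on_closed_Collect_le) simp
    then have "closure {a..<c} \<subseteq> {u \<in> {a..c}. norm (y u - y a) \<le> e * (u - a)}"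
      by (rule closure_minimal[rotated]) (use below_c in auto)
    then show ?thesis using False \<open>a \<le> c\<close> \<open>c \<le> b\<close> unfolding S_def by auto
  qed
  have "c = b"
  proof (rule ccontr)
    assume "c \<noteq> b"
    then have "c < b" using \<open>c \<le> b\<close> by simp
    moreover have "norm (y c - y a) \<le> e * (c - a)" using \<open>c \<in> S\<close> by (auto simp: S_def)
    moreover have "c \<in> {a..<b}" using \<open>a \<le> c\<close> \<open>c < b\<close> by simp
    ultimately obtain w where w: "c < w" "w \<le> b" "\<And>u. u \<in> {c..w} \<Longrightarrow> norm (y u - y a) \<le> e * (u - a)"
      using right_derivative_zero_extend[OF d _ \<open>e > 0\<close>] by blast
    have "w \<in> S" unfolding S_def
    proof (intro CollectI conjI ballI)
      show "w \<in> {a..b}" using w \<open>a \<le> c\<close> by auto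
      fix u assume "u \<in> {a..w}"
      then show "norm (y u - y a) \<le> e * (u - a)"
        using w(3)[of u] \<open>c \<in> S\<close> by (cases "u \<le> c") (auto simp: S_def)
    qed
    then have "w \<le> c" unfolding c_def using bdd by (rule cSup_upper)
    then show False using w by simp
  qed
  then show ?thesis using \<open>c \<in> S\<close> \<open>a \<le> b\<close> by (auto simp: S_def)
qed

lemma right_derivative_zero_imp_constant:
  fixes y :: "real \<Rightarrow> 'a::real_normed_vector"
  assumes cont: "continuous_on {a..b} y"
    and d: "\<And>t. t \<in> {a..<b} \<Longrightarrow> (y has_vector_derivative 0) (at t within {t<..b})"
    and t: "t \<in> {a..b}"
  shows "y t = y a"
proof -
  have "norm (y t - y a) \<le> 0 + e" if "e > 0" for e
  proof -
    have "norm (y t - y a) \<le> e / (t - a + 1) * (t - a)"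
    proof (rule right_derivative_zero_bound)
      show "continuous_on {a..t} y" using t by (intro continuous_on_subset[OF cont]) auto
      show "(y has_vector_derivative 0) (at s within {s<..t})" if "s \<in> {a..<t}" for s
        using that t by (intro has_vector_derivative_within_subset[OF d[of s]]) auto
    qed (use t that in auto)
    also have "\<dots> \<le> e" using t that by (simp add: field_simps)
    finally show ?thesis by simp
  qed
  then have "norm (y t - y a) \<le> 0" by (rule field_le_epsilon)
  then show ?thesis by simp
qed

text \<open>Subtracting \<open>\<lambda>u. \<integral>\<^sub>a\<^sup>u g\<close> reduces the claim to a function with vanishing right derivative.\<close>
lemma right_derivative_imp_has_vector_derivative:
  fixes x g :: "real \<Rightarrow> 'a::banach"
  assumes cx: "continuous_on {a..b} x" and cg: "continuous_on {a..b} g"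
    and d: "\<And>t. t \<in> {a..<b} \<Longrightarrow> (x has_vector_derivative g t) (at_right t)"
    and s: "s \<in> {a..b}"
  shows "(x has_vector_derivative g s) (at s within {a..b})"
proof -
  define I where "I = (\<lambda>u. integral {a..u} g)"
  have dI: "(I has_vector_derivative g u) (at u within {a..b})" if "u \<in> {a..b}" for u
    unfolding I_def by (rule integral_has_vector_derivative[OF cg that])
  have "continuous_on {a..b} I"
    unfolding continuous_on_eq_continuous_within using dI has_vector_derivative_continuous by blast
  then have "continuous_on {a..b} (\<lambda>u. x u - I u)" by (intro continuous_on_diff cx)
  moreover have "((\<lambda>u. x u - I u) has_vector_derivative 0) (at t within {t<..b})" if t: "t \<in> {a..<b}" for t
  proof -
    have "(x has_vector_derivative g t) (at t within {t<..b})"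
      by (rule has_vector_derivative_within_subset[OF d[OF t]]) auto
    moreover have "(I has_vector_derivative g t) (at t within {t<..b})"
      by (rule has_vector_derivative_within_subset[OF dI]) (use t in auto)
    ultimately show ?thesis using has_vector_derivative_diff[of x "g t" _ I "g t"] by simp
  qed
  ultimately have "x u - I u = x a - I a" if "u \<in> {a..b}" for u
    using right_derivative_zero_imp_constant[of a b "\<lambda>u. x u - I u" u] that by simp
  moreover have "I a = 0" by (simp add: I_def)
  ultimately have eq: "x u = x a + I u" if "u \<in> {a..b}" for u
    using that by (metis add.commute diff_add_cancel diff_zero)
  have "((\<lambda>u. x a + I u) has_vector_derivative g s) (at s within {a..b})"
    using has_vector_derivative_add[OF has_vector_derivative_const dI[OF s]] by simp
  then show ?thesis using has_vector_derivative_transform[where f="\<lambda>u. x a + I u" and g=x, OF s] eq by blast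
qed

section \<open>Smoothing along the delay equation\<close>

lemma Ck_on_dde_rhs:
  fixes f :: "'a::euclidean_space \<Rightarrow> 'a \<Rightarrow> 'a"
  assumes "smooth_map (\<lambda>(u, v). f u v)" and x: "Ck_on k A x"
    and "S \<subseteq> A" and "\<And>s. s \<in> S \<Longrightarrow> s - \<tau> \<in> A"
  shows "Ck_on k S (\<lambda>s. f (x s) (x (s - \<tau>)))"
proof -
  have "Ck_on k S (\<lambda>s. (x s, x (- \<tau> + s)))"
    using assms(3,4) by (intro Ck_on_Pair Ck_on_subset[OF x] Ck_on_translate[OF x]) auto
  moreover have "Ck_map k (\<lambda>(u, v). f u v)" using assms(1) unfolding smooth_map_def by blast
  ultimately have "Ck_on k S (\<lambda>s. (\<lambda>(u, v). f u v) (x s, x (- \<tau> + s)))"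
    by (rule Ck_map_compose_Ck_on[rotated])
  then show ?thesis by simp
qed

context
  fixes f :: "'a::euclidean_space \<Rightarrow> 'a \<Rightarrow> 'a" and \<tau> T :: real and x0 x :: "real \<Rightarrow> 'a"
  assumes smooth: "smooth_map (\<lambda>(u, v). f u v)" and "\<tau> > 0" and "0 \<le> T"
    and x0: "continuous_on {-\<tau>..0} x0" and sol: "is_solution f \<tau> T x0 x"
begin

lemma dde_solution_continuous_on: "continuous_on {-\<tau>..T} x"
proof -
  have "continuous_on {-\<tau>..0} x"
    by (rule continuous_on_eq[OF x0]) (use sol in \<open>auto simp: is_solution_def\<close>)
  then have "continuous_on ({-\<tau>..0} \<union> {0..T}) x"
    using sol by (intro continuous_on_closed_Un) (auto simp: is_solution_def)
  moreover have "{-\<tau>..0} \<union> {0..T} = {-\<tau>..T}" using \<open>\<tau> > 0\<close> \<open>0 \<le> T\<close> by auto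
  ultimately show ?thesis by simp
qed

lemma dde_rhs_continuous_on: "continuous_on {0..T} (\<lambda>s. f (x s) (x (s - \<tau>)))"
proof -
  have "Ck_on 0 {0..T} (\<lambda>s. f (x s) (x (s - \<tau>)))"
    using dde_solution_continuous_on \<open>\<tau> > 0\<close>
    by (intro Ck_on_dde_rhs[OF smooth, of 0 "{-\<tau>..T}"]) (auto simp: Ck_on_0)
  then show ?thesis by (simp add: Ck_on_0)
qed

lemma dde_solution_has_vector_derivative:
  assumes "s \<in> {0..T}"
  shows "(x has_vector_derivative f (x s) (x (s - \<tau>))) (at s within {0..T})"
proof (rule right_derivative_imp_has_vector_derivative[OF _ dde_rhs_continuous_on _ assms])
  show "continuous_on {0..T} x" using sol by (simp add: is_solution_def)
  show "(x has_vector_derivative f (x t) (x (t - \<tau>))) (at_right t)" if "t \<in> {0..<T}" for t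
    using sol that by (simp add: is_solution_def)
qed

lemma dde_solution_Ck_on: "Ck_on (Suc k) {real k * \<tau>..T} x"
proof (induction k)
  case 0
  show ?case
    unfolding Ck_on_Suc Ck_on_0 using dde_rhs_continuous_on dde_solution_has_vector_derivative
    by (intro exI[of _ "\<lambda>s. f (x s) (x (s - \<tau>))"]) auto
next
  case (Suc k)
  define S where "S = {real (Suc k) * \<tau>..T}"
  have "S \<subseteq> {0..T}" using \<open>\<tau> > 0\<close> by (auto simp: S_def)
  have "Ck_on (Suc k) S (\<lambda>s. f (x s) (x (s - \<tau>)))"
    using Suc.IH \<open>\<tau> > 0\<close> by (intro Ck_on_dde_rhs[OF smooth]) (auto simp: S_def algebra_simps)
  moreover have "(x has_vector_derivative f (x s) (x (s - \<tau>))) (at s within S)" if "s \<in> S" for s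
    using dde_solution_has_vector_derivative \<open>S \<subseteq> {0..T}\<close> that
    by (blast intro: has_vector_derivative_within_subset)
  ultimately show ?case
    unfolding Ck_on_Suc S_def by (intro exI[of _ "\<lambda>s. f (x s) (x (s - \<tau>))"]) blast
qed

end

section \<open>Normalized derivatives and segments\<close>

text \<open>Derivatives within \<open>S\<close> are unique at limit points of \<open>S\<close>, so the choice made in
  \<open>tder\<close> agrees with any other family of derivatives.\<close>
lemma tder_eq_derivs_on:
  assumes D: "derivs_on K S g D" and "k \<le> K" and limpt: "\<And>u. u \<in> S \<Longrightarrow> u islimpt S"
    and "u \<in> S"
  shows "tder k S g u = D k u /\<^sub>R fact k"
proof -
  define D' where "D' = (SOME D. derivs_on k S g D)"
  have Dk: "derivs_on k S g D" using derivs_on_le[OF D \<open>k \<le> K\<close>] .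
  then have D': "derivs_on k S g D'" unfolding D'_def by (rule someI[of "derivs_on k S g"])
  have "\<forall>u\<in>S. D' j u = D j u" if "j \<le> k" for j
    using that
  proof (induction j)
    case 0
    then show ?case using Dk D' unfolding derivs_on_def by auto
  next
    case (Suc j)
    show ?case
    proof
      fix u assume u: "u \<in> S"
      have "(D j has_vector_derivative D (Suc j) u) (at u within S)"
        using Dk Suc.prems u unfolding derivs_on_def by auto
      moreover have "(D' j has_vector_derivative D' (Suc j) u) (at u within S)"
        using D' Suc.prems u unfolding derivs_on_def by auto
      then have "(D j has_vector_derivative D' (Suc j) u) (at u within S)"
        using has_vector_derivative_transform[of u S "D j" "D' j"] Suc u by auto
      moreover have "at u within S \<noteq> bot" using limpt[OF u] by (simp add: trivial_limit_within)
      ultimately show "D' (Suc j) u = D (Suc j) u" using vector_derivative_unique_within by metis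
    qed
  qed
  then show ?thesis unfolding tder_def D'_def[symmetric] using \<open>u \<in> S\<close> by auto
qed

lemma tder_Icc_eq:
  assumes "derivs_on K S g D" and "{\<alpha>..\<beta>} \<subseteq> S" and "\<alpha> < \<beta>" and "k \<le> K" and "u \<in> {\<alpha>..\<beta>}"
  shows "tder k {\<alpha>..\<beta>} g u = D k u /\<^sub>R fact k"
  by (rule tder_eq_derivs_on[OF derivs_on_subset[OF assms(1,2)] assms(4) _ assms(5)])
    (use assms(3) in auto)

lemma gridpt_Icc_subset:
  assumes "i \<in> {1..p}" and "0 \<le> \<tau>"
  shows "{gridpt p \<tau> i .. gridpt p \<tau> i + \<tau> / real p} \<subseteq> {-\<tau>..0}"
proof -
  have "real i * (\<tau> / real p) \<le> real p * (\<tau> / real p)"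
    using assms by (intro mult_right_mono) auto
  moreover have "1 * (\<tau> / real p) \<le> real i * (\<tau> / real p)"
    using assms by (intro mult_right_mono) auto
  moreover have "real p * (\<tau> / real p) = \<tau>" using assms by simp
  ultimately show ?thesis unfolding gridpt_def by auto
qed

lemma Ck_on_imp_Cp:
  assumes "Ck_on (Suc n) {-\<tau>..0} y" and "0 \<le> \<tau>"
  shows "Cp p \<tau> (\<lambda>_. n) y"
  unfolding Cp_def
proof
  fix i assume "i \<in> {1..p}"
  then have "Ck_on (n + 1) {gridpt p \<tau> i .. gridpt p \<tau> i + \<tau> / real p} y"
    using Ck_on_subset[OF assms(1) gridpt_Icc_subset] assms(2) by simp
  then show "\<exists>xt. Ck_on (n + 1) {gridpt p \<tau> i .. gridpt p \<tau> i + \<tau> / real p} xt \<and>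
                 (\<forall>s\<in>piece p \<tau> i. y s = xt s)" by blast
qed

lemma gridpt_in_piece: "s \<in> {0..<\<tau> / real p} \<Longrightarrow> gridpt p \<tau> i + s \<in> piece p \<tau> i"
  by (simp add: piece_def)

lemma tder_piece_eq:
  assumes "derivs_on K {-\<tau>..0} y D" and "\<tau> > 0" and "i \<in> {1..p}" and "k \<le> K"
    and "u \<in> piece p \<tau> i"
  shows "tder k (piece p \<tau> i) y u = D k u /\<^sub>R fact k"
proof (rule tder_eq_derivs_on[OF derivs_on_subset[OF assms(1)] assms(4) _ assms(5)])
  show "piece p \<tau> i \<subseteq> {-\<tau>..0}"
    by (rule order_trans[OF _ gridpt_Icc_subset[OF assms(3)]]) (use assms(2) in \<open>auto simp: piece_def\<close>)
  have "0 < \<tau> / real p" using assms(2,3) by simp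
  then show "v islimpt piece p \<tau> i" if "v \<in> piece p \<tau> i" for v
    using that unfolding piece_def by simp
qed

lemma derivs_on_seg:
  assumes "derivs_on K {c..T} x D" and "c + \<tau> \<le> t" and "t \<le> T"
  shows "derivs_on K {-\<tau>..0} (seg x t) (\<lambda>j s. D j (t + s))"
  unfolding seg_def by (rule derivs_on_translate[OF assms(1)]) (use assms(2,3) in auto)

lemma z_fun_eq_derivs_on: "derivs_on K {-\<tau>..0} y D \<Longrightarrow> 0 \<le> \<tau> \<Longrightarrow> z_fun y = D 0 0"
  unfolding z_fun_def by (rule derivs_on_0[symmetric]) auto

lemma j_fun_eq_derivs_on:
  assumes "derivs_on K {-\<tau>..0} y D" and "\<tau> > 0" and "i \<in> {1..p}" and "k \<le> K"
  shows "j_fun p \<tau> i k y = D k (gridpt p \<tau> i) /\<^sub>R fact k"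
  using tder_piece_eq[OF assms gridpt_in_piece[of 0]] assms(2,3) unfolding j_fun_def by simp

lemma xi_fun_eq_derivs_on:
  assumes "derivs_on K {-\<tau>..0} y D" and "\<tau> > 0" and "i \<in> {1..p}" and "Suc n \<le> K"
    and "s \<in> {0..<\<tau> / real p}"
  shows "xi_fun p \<tau> n i y s = D (Suc n) (gridpt p \<tau> i + s) /\<^sub>R fact (Suc n)"
  using tder_piece_eq[OF assms(1-4) gridpt_in_piece[OF assms(5)]] unfolding xi_fun_def .

lemma grid_intervals_cover:
  fixes a h e1 e2 u :: real
  assumes "h > 0" and "1 \<le> N" and u: "u \<in> {a * h + e1 .. (a + real N) * h + e2}"
  obtains "u \<in> {a * h + e1 .. (a + 1) * h}"
    | j where "j \<in> {1..<N}" "u \<in> {(a + real j) * h .. (a + real j + 1) * h}"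
    | "u \<in> {(a + real N) * h .. (a + real N) * h + e2}"
proof (cases "u \<le> (a + 1) * h \<or> (a + real N) * h \<le> u")
  case True
  then show ?thesis using u that(1,3) by auto
next
  case False
  define q where "q = \<lfloor>u / h - a\<rfloor>"
  have "a + 1 < u / h" "u / h < a + real N" using False \<open>h > 0\<close> by (auto simp: field_simps)
  then have "1 \<le> q" "q < int N" unfolding q_def by (simp_all add: le_floor_iff floor_less_iff)
  then have "nat q \<in> {1..<N}" by auto
  have "of_int q \<le> u / h - a" "u / h - a < of_int q + 1" unfolding q_def by linarith+
  then have "(a + real (nat q)) * h \<le> u" "u \<le> (a + real (nat q) + 1) * h"
    using \<open>1 \<le> q\<close> \<open>h > 0\<close> by (auto simp: field_simps)
  then show ?thesis using that(2) \<open>nat q \<in> {1..<N}\<close> by auto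
qed

lemma derivs_on_enclosure:
  fixes g :: "real \<Rightarrow> 'a::real_normed_vector"
  assumes D: "derivs_on K {c..T} g D" and "k \<le> K" and "h > 0" and "1 \<le> N"
    and "0 < \<epsilon>" "\<epsilon> < h" "0 < \<epsilon>'" and "c \<le> a * h" and "(a + real N) * h + \<epsilon>' \<le> T"
    and first: "\<And>s. s \<in> {a * h + \<epsilon> .. (a + 1) * h} \<Longrightarrow>
                  tder k {a * h + \<epsilon> .. (a + 1) * h} g s \<in> A"
    and middle: "\<And>j s. j \<in> {1..<N} \<Longrightarrow> s \<in> {(a + real j) * h .. (a + real j + 1) * h} \<Longrightarrow>
                  tder k {(a + real j) * h .. (a + real j + 1) * h} g s \<in> B j"
    and final: "\<And>s. s \<in> {(a + real N) * h .. (a + real N) * h + \<epsilon>'} \<Longrightarrow>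
                  tder k {(a + real N) * h .. (a + real N) * h + \<epsilon>'} g s \<in> Z"
    and u: "u \<in> {a * h + \<epsilon> .. (a + real N) * h + \<epsilon>'}"
  shows "D k u /\<^sub>R fact k \<in> A \<union> (\<Union>j\<in>{1..<N}. B j) \<union> Z"
proof -
  have grid_mono: "(a + x) * h \<le> (a + y) * h" if "x \<le> y" for x y
    using that \<open>h > 0\<close> by (simp add: mult_right_mono)
  from \<open>h > 0\<close> \<open>1 \<le> N\<close> u show ?thesis
  proof (cases rule: grid_intervals_cover)
    case 1
    have "(a + 1) * h \<le> T" using grid_mono[of 1 "real N"] \<open>1 \<le> N\<close> assms(7,9) by simp
    with assms(5,6,8) have "{a * h + \<epsilon> .. (a + 1) * h} \<subseteq> {c..T}" "a * h + \<epsilon> < (a + 1) * h"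
      by (auto simp: algebra_simps)
    then have "tder k {a * h + \<epsilon> .. (a + 1) * h} g u = D k u /\<^sub>R fact k"
      using tder_Icc_eq[OF D _ _ \<open>k \<le> K\<close> 1] by blast
    then show ?thesis using first[OF 1] by simp
  next
    case (2 j)
    have "(a + real j + 1) * h \<le> T"
      using grid_mono[of "real j + 1" "real N"] 2 assms(7,9) by (simp add: add.assoc)
    moreover have "c \<le> (a + real j) * h" using grid_mono[of 0 "real j"] assms(8) by simp
    ultimately have "{(a + real j) * h .. (a + real j + 1) * h} \<subseteq> {c..T}" by auto
    moreover have "(a + real j) * h < (a + real j + 1) * h" using \<open>h > 0\<close> by (simp add: algebra_simps)
    ultimately have "tder k {(a + real j) * h .. (a + real j + 1) * h} g u = D k u /\<^sub>R fact k"
      using tder_Icc_eq[OF D _ _ \<open>k \<le> K\<close> 2(2)] by blast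
    then show ?thesis using middle[OF 2] 2(1) by auto
  next
    case 3
    have "a * h \<le> (a + real N) * h" using grid_mono[of 0] by simp
    with assms(7-9) have "{(a + real N) * h .. (a + real N) * h + \<epsilon>'} \<subseteq> {c..T}" by auto
    then have "tder k {(a + real N) * h .. (a + real N) * h + \<epsilon>'} g u = D k u /\<^sub>R fact k"
      using tder_Icc_eq[OF D _ _ \<open>k \<le> K\<close> 3] \<open>0 < \<epsilon>'\<close> by simp
    then show ?thesis using final[OF 3] by simp
  qed
qed

lemma box_hull_inc: "y \<in> A \<Longrightarrow> y \<in> box_hull A"
  unfolding box_hull_def by (rule hull_inc)

theorem mainTheorem3:
  fixes f :: "real^'d \<Rightarrow> real^'d \<Rightarrow> real^'d"
    and p m mb n :: nat and \<tau> T \<epsilon>1 \<epsilon>2 :: real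
    and \<eta> :: "nat \<Rightarrow> nat"
    and x0 x :: "real \<Rightarrow> real^'d"
    and L R Rt :: "nat \<Rightarrow> nat \<Rightarrow> (real^'d) set"
    and C :: "nat \<Rightarrow> nat \<Rightarrow> nat \<Rightarrow> (real^'d) set"
  defines "h \<equiv> \<tau> / real p"
  assumes hp: "p \<ge> 1" and h\<tau>: "\<tau> > 0"
    and hf: "smooth_map (\<lambda>(u, v). f u v)"
    and hx0: "Cp p \<tau> \<eta> x0" and hx0c: "continuous_on {-\<tau>..0} x0"
    and hsol: "is_solution f \<tau> T x0 x"
    and hmb: "mb \<ge> 1"
    and he1: "0 < \<epsilon>1" "\<epsilon>1 < h" and he2: "0 < \<epsilon>2" "\<epsilon>2 < h"
    and hT: "(real (m + mb + 1)) * h + \<epsilon>2 \<le> T"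
    and hmp: "1 \<le> m div p" and hn: "n = m div p - 1"
    and boxes: "\<And>k i. k \<le> n + 1 \<Longrightarrow> i \<le> p \<Longrightarrow>
                  is_box (L k i) \<and> is_box (R k i) \<and> is_box (Rt k i) \<and>
                  (\<forall>j\<in>{1..mb}. is_box (C k i j))"
    and hL: "\<And>k i s. k \<le> n + 1 \<Longrightarrow> i \<le> p \<Longrightarrow>
               s \<in> {(real m - real i) * h + \<epsilon>1 .. (real m - real i + 1) * h} \<Longrightarrow>
               tder k {(real m - real i) * h + \<epsilon>1 .. (real m - real i + 1) * h} x s \<in> L k i"
    and hC: "\<And>k i j s. k \<le> n + 1 \<Longrightarrow> i \<le> p \<Longrightarrow> j \<in> {1..mb} \<Longrightarrow>
               s \<in> {(real m - real i + real j) * h .. (real m - real i + real j + 1) * h} \<Longrightarrow>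
               tder k {(real m - real i + real j) * h .. (real m - real i + real j + 1) * h} x s \<in> C k i j"
    and hR: "\<And>k i s. k \<le> n + 1 \<Longrightarrow> i \<le> p \<Longrightarrow>
               s \<in> {(real m - real i + real mb) * h .. (real m - real i + real mb) * h + \<epsilon>2} \<Longrightarrow>
               tder k {(real m - real i + real mb) * h .. (real m - real i + real mb) * h + \<epsilon>2} x s \<in> R k i"
    and hRt: "\<And>k i s. k \<le> n + 1 \<Longrightarrow> i \<le> p \<Longrightarrow>
               s \<in> {(real m - real i + real mb + 1) * h .. (real m - real i + real mb + 1) * h + \<epsilon>2} \<Longrightarrow>
               tder k {(real m - real i + real mb + 1) * h .. (real m - real i + real mb + 1) * h + \<epsilon>2} x s \<in> Rt k i"
  shows "\<forall>t \<in> {real m * h + \<epsilon>1 .. real (m + mb) * h + \<epsilon>2}.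
           (Cp p \<tau> (\<lambda>_. n) (seg x t) \<and> Ck_on (n + 1) {-\<tau>..0} (seg x t)) \<and>
           z_fun (seg x t) \<in> box_hull (L 0 0 \<union> (\<Union>j\<in>{1..<mb}. C 0 0 j) \<union> R 0 0) \<and>
           (\<forall>i\<in>{1..p}. \<forall>k\<le>n.
              j_fun p \<tau> i k (seg x t) \<in> box_hull (L k i \<union> (\<Union>j\<in>{1..<mb}. C k i j) \<union> R k i)) \<and>
           (\<forall>i\<in>{1..p}. \<forall>s\<in>{0..<h}.
              xi_fun p \<tau> n i (seg x t) s \<in>
                box_hull (L (n+1) i \<union> (\<Union>j\<in>{1..mb}. C (n+1) i j) \<union> Rt (n+1) i))"
proof -
  \<comment> \<open>Neither \<open>boxes\<close> nor \<open>hx0\<close> is needed: the values lie in the union of the enclosures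
     itself, and continuity of \<open>x0\<close> suffices for the smoothing argument.\<close>
  let ?I = "{real m * h + \<epsilon>1 .. real (m + mb) * h + \<epsilon>2}"
  have "h > 0" and \<tau>_eq: "\<tau> = real p * h" using hp h\<tau> by (simp_all add: h_def)
  have grid_le: "a * h \<le> b * h" if "a \<le> b" for a b
    using that \<open>h > 0\<close> by (simp add: mult_right_mono)
  have "(n + 1) * p \<le> m" using hmp hn div_times_less_eq_dividend[of m p] by simp
  then have "real ((n + 1) * p) \<le> real m" by (simp only: of_nat_le_iff)
  then have np: "real n * real p + real p \<le> real m" by (simp add: algebra_simps)
  have i_bound: "real n * \<tau> \<le> (real m - real i) * h" if "i \<le> p" for i
    using grid_le[of "real n * real p" "real m - real i"] np that unfolding \<tau>_eq by (simp add: mult.assoc)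
  have T_bound: "(real m + real mb + 1) * h + \<epsilon>2 \<le> T" using hT by (simp add: add_ac)
  moreover have "0 \<le> (real m + real mb + 1) * h" using \<open>h > 0\<close> by simp
  ultimately have "0 \<le> T" using he2 by linarith
  obtain D where D: "derivs_on (Suc n) {real n * \<tau>..T} x D"
    using dde_solution_Ck_on[OF hf h\<tau> \<open>0 \<le> T\<close> hx0c hsol, of n] unfolding Ck_on_def by blast
  have seg_D: "derivs_on (Suc n) {-\<tau>..0} (seg x t) (\<lambda>j s. D j (t + s))" if t: "t \<in> ?I" for t
  proof (rule derivs_on_seg[OF D])
    have "real n * \<tau> + \<tau> \<le> real m * h"
      using i_bound[of p] unfolding \<tau>_eq by (simp add: algebra_simps)
    moreover have "real (m + mb) * h \<le> (real m + real mb + 1) * h" by (rule grid_le) simp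
    moreover have "real m * h + \<epsilon>1 \<le> t" "t \<le> real (m + mb) * h + \<epsilon>2"
      using t by (simp_all only: atLeastAtMost_iff)
    ultimately show "real n * \<tau> + \<tau> \<le> t" "t \<le> T" using T_bound he1 by linarith+
  qed
  have enclosure_R: "D k (t - real i * h) /\<^sub>R fact k \<in> L k i \<union> (\<Union>j\<in>{1..<mb}. C k i j) \<union> R k i"
    if "t \<in> ?I" "i \<le> p" "k \<le> n" for t i k
  proof (rule derivs_on_enclosure[OF D, where a = "real m - real i" and N = mb and h = h
        and \<epsilon> = \<epsilon>1 and \<epsilon>' = \<epsilon>2])
    show "(real m - real i + real mb) * h + \<epsilon>2 \<le> T"
      using grid_le[of "real m - real i + real mb" "real m + real mb + 1"] T_bound by simp
    show "t - real i * h \<in> {(real m - real i) * h + \<epsilon>1 .. (real m - real i + real mb) * h + \<epsilon>2}"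
      using that(1) by (simp add: algebra_simps)
  qed (use that hmb he1 he2 \<open>h > 0\<close> i_bound in \<open>auto intro: hL hC hR\<close>)
  have enclosure_Rt: "D (n + 1) (t - real i * h + s) /\<^sub>R fact (n + 1)
      \<in> L (n + 1) i \<union> (\<Union>j\<in>{1..mb}. C (n + 1) i j) \<union> Rt (n + 1) i"
    if "t \<in> ?I" "i \<le> p" "s \<in> {0..<h}" for t i s
  proof -
    have Suc_eq: "real m - real i + real (Suc mb) = real m - real i + real mb + 1" by simp
    have "D (n + 1) (t - real i * h + s) /\<^sub>R fact (n + 1)
      \<in> L (n + 1) i \<union> (\<Union>j\<in>{1..<Suc mb}. C (n + 1) i j) \<union> Rt (n + 1) i"
    proof (rule derivs_on_enclosure[OF D, where a = "real m - real i" and N = "Suc mb" and h = h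
          and \<epsilon> = \<epsilon>1 and \<epsilon>' = \<epsilon>2])
      show "(real m - real i + real (Suc mb)) * h + \<epsilon>2 \<le> T"
        using grid_le[of "real m - real i + real (Suc mb)" "real m + real mb + 1"] T_bound by simp
      show "t - real i * h + s \<in> {(real m - real i) * h + \<epsilon>1 .. (real m - real i + real (Suc mb)) * h + \<epsilon>2}"
        using that(1,3) by (simp add: algebra_simps)
    qed (unfold Suc_eq, use that hmb he1 he2 \<open>h > 0\<close> i_bound in \<open>auto intro: hL hC hRt\<close>)
    then show ?thesis by (simp add: atLeastLessThanSuc_atLeastAtMost)
  qed
  show ?thesis
  proof (intro ballI conjI allI impI)
    fix t assume "t \<in> ?I"
    then show "Ck_on (n + 1) {-\<tau>..0} (seg x t)" using seg_D unfolding Ck_on_def by auto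
    then show "Cp p \<tau> (\<lambda>_. n) (seg x t)" using h\<tau> by (intro Ck_on_imp_Cp) simp_all
  next
    fix t assume "t \<in> ?I"
    moreover have "z_fun (seg x t) = D 0 (t - real 0 * h) /\<^sub>R fact 0"
      using z_fun_eq_derivs_on[OF seg_D[OF \<open>t \<in> ?I\<close>]] h\<tau> by simp
    ultimately show "z_fun (seg x t) \<in> box_hull (L 0 0 \<union> (\<Union>j\<in>{1..<mb}. C 0 0 j) \<union> R 0 0)"
      using enclosure_R[of t 0 0] by (simp add: box_hull_inc)
  next
    fix t i k assume "t \<in> ?I" "i \<in> {1..p}" "k \<le> n"
    moreover have "j_fun p \<tau> i k (seg x t) = D k (t - real i * h) /\<^sub>R fact k"
      using j_fun_eq_derivs_on[OF seg_D[OF \<open>t \<in> ?I\<close>] h\<tau> \<open>i \<in> {1..p}\<close>] \<open>k \<le> n\<close>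
      by (simp add: gridpt_def h_def)
    ultimately show "j_fun p \<tau> i k (seg x t) \<in> box_hull (L k i \<union> (\<Union>j\<in>{1..<mb}. C k i j) \<union> R k i)"
      using enclosure_R[of t i k] by (simp add: box_hull_inc)
  next
    fix t i s assume "t \<in> ?I" "i \<in> {1..p}" "s \<in> {0..<h}"
    moreover have "xi_fun p \<tau> n i (seg x t) s = D (n + 1) (t - real i * h + s) /\<^sub>R fact (n + 1)"
      using xi_fun_eq_derivs_on[OF seg_D[OF \<open>t \<in> ?I\<close>] h\<tau> \<open>i \<in> {1..p}\<close> order_refl]
        \<open>s \<in> {0..<h}\<close> by (simp add: gridpt_def h_def algebra_simps)
    ultimately show "xi_fun p \<tau> n i (seg x t) s
        \<in> box_hull (L (n+1) i \<union> (\<Union>j\<in>{1..mb}. C (n+1) i j) \<union> Rt (n+1) i)"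
      using enclosure_Rt[of t i s] by (simp add: box_hull_inc)
  qed
qed

end
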